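(* Let $\Gamma$ be a finite simple graph on $n$ vertices and let $\alpha,\beta\models n$ be compositions such that $\beta$ refines $\alpha$ (i.e. $\alpha$ is obtained from $\beta$ by adding together some groups of consecutive parts). Then $\zeta_\alpha(\Gamma)\le\zeta_\beta(\Gamma)$.
   Context: For a coloring $\lambda:V\to\mathbb{N}$ of a finite simple graph $\Gamma$ with values $i_1<\dots<i_k$, let $I_j=\lambda^{-1}(\{i_1,\dots,i_j\})$, $I_0=\emptyset$. It is ordered if for each $j$, no two distinct vertices $u,w$ with $\lambda(u)=\lambda(w)=i_j$ are joined by a path in $\Gamma$ (possibly a single edge) all of whose internal vertices lie in $I_{j-1}$. Its type is $(|\lambda^{-1}(i_1)|,\dots,|\lambda^{-1}(i_k)|)$. For a composition $\alpha$ of $n$ with $k(\alpha)$ parts, $\zeta_\alpha(\Gamma)$ is the number of surjective ordered colorings $\lambda:V\to\{1,\dots,k(\alpha)\}$ of type $\alpha$. *)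

theory Defs
  imports Main "HOL-Library.FuncSet"
begin

definition simple_graph :: "'a set \<Rightarrow> ('a \<Rightarrow> 'a \<Rightarrow> bool) \<Rightarrow> bool" where
  "simple_graph V E \<longleftrightarrow> finite V \<and> (\<forall>u v. E u v \<longrightarrow> u \<in> V \<and> v \<in> V)
     \<and> (\<forall>u v. E u v \<longrightarrow> E v u) \<and> (\<forall>v. \<not> E v v)"

definition path_via :: "('a \<Rightarrow> 'a \<Rightarrow> bool) \<Rightarrow> 'a set \<Rightarrow> 'a \<Rightarrow> 'a \<Rightarrow> bool" where
  "path_via E S u w \<longleftrightarrow> (\<exists>xs. set xs \<subseteq> S \<and> distinct (u # xs @ [w])
      \<and> successively E (u # xs @ [w]))"

text \<open>Ordered coloring: for each colour value c (= i_j) of the colouring, the set I_{j-1}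
  consists of the vertices with colour smaller than c.\<close>
definition ordered_coloring :: "'a set \<Rightarrow> ('a \<Rightarrow> 'a \<Rightarrow> bool) \<Rightarrow> ('a \<Rightarrow> nat) \<Rightarrow> bool" where
  "ordered_coloring V E f \<longleftrightarrow>
     (\<forall>c \<in> f ` V. \<forall>u \<in> V. \<forall>w \<in> V. u \<noteq> w \<and> f u = c \<and> f w = c \<longrightarrow>
        \<not> path_via E {v \<in> V. f v < c} u w)"

definition coloring_type :: "'a set \<Rightarrow> ('a \<Rightarrow> nat) \<Rightarrow> nat list" where
  "coloring_type V f = map (\<lambda>c. card {v \<in> V. f v = c}) (sorted_list_of_set (f ` V))"

definition composition :: "nat \<Rightarrow> nat list \<Rightarrow> bool" where
  "composition n \<alpha> \<longleftrightarrow> (\<forall>a \<in> set \<alpha>. 0 < a) \<and> sum_list \<alpha> = n"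

definition refines :: "nat list \<Rightarrow> nat list \<Rightarrow> bool" where
  "refines \<beta> \<alpha> \<longleftrightarrow> (\<exists>bs :: nat list list. (\<forall>b \<in> set bs. b \<noteq> []) \<and>
       concat bs = \<beta> \<and> map sum_list bs = \<alpha>)"

definition zeta :: "nat list \<Rightarrow> 'a set \<Rightarrow> ('a \<Rightarrow> 'a \<Rightarrow> bool) \<Rightarrow> nat" where
  "zeta \<alpha> V E = card {f \<in> V \<rightarrow>\<^sub>E {1..length \<alpha>}. f ` V = {1..length \<alpha>}
      \<and> ordered_coloring V E f \<and> coloring_type V f = \<alpha>}"

end

theory Submission
  imports Defs
begin

text \<open>Refining \<open>\<alpha>\<close> to \<open>\<beta>\<close> is a sequence of steps splitting one part \<open>a + b\<close> into \<open>a, b\<close>, so it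
  suffices to inject ordered colourings of the coarser type into those of the finer one. Given
  such a colouring, split the colour class of size \<open>a + b\<close> into a chosen subset of size \<open>a\<close>,
  which keeps its colour, and the remaining \<open>b\<close> vertices, which get the next colour; all
  larger colours move up by one. Merging the two classes again recovers the colouring, so the
  map is injective. The new colouring is ordered: a path between two vertices of the same new
  colour whose internal vertices have smaller new colour has all internal vertices of old
  colour at most the common old colour of its ends, and an ordered colouring excludes even such
  paths, by cutting the path at its first internal vertex of that colour.\<close>

definition color_class :: "'a set \<Rightarrow> ('a \<Rightarrow> nat) \<Rightarrow> nat \<Rightarrow> 'a set" where
  "color_class V f c = {v \<in> V. f v = c}"

lemma path_via_mono: "path_via E S u w \<Longrightarrow> S \<subseteq> T \<Longrightarrow> path_via E T u w"
  unfolding path_via_def by blast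

lemma ordered_coloring_no_path_le:
  assumes ord: "ordered_coloring V E f" and "u \<in> V" "w \<in> V" "u \<noteq> w" "f u = f w"
  shows "\<not> path_via E {v \<in> V. f v \<le> f u} u w"
proof
  assume "path_via E {v \<in> V. f v \<le> f u} u w"
  then obtain xs where xs: "set xs \<subseteq> {v \<in> V. f v \<le> f u}" "distinct (u # xs @ [w])"
    "successively E (u # xs @ [w])" unfolding path_via_def by blast
  have no_path: "\<not> path_via E {v \<in> V. f v < f u} u z" if "z \<in> V" "u \<noteq> z" "f z = f u" for z
    using ord that \<open>u \<in> V\<close> unfolding ordered_coloring_def by force
  show False
  proof (cases "\<exists>x \<in> set xs. f x = f u")
    case True
    then obtain ys z zs where split: "xs = ys @ z # zs" "f z = f u" "\<forall>y \<in> set ys. f y \<noteq> f u"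
      by (auto elim!: split_list_first_propE)
    have "successively E ((u # ys @ [z]) @ (zs @ [w]))"
      using xs(3) split(1) by simp
    then have "successively E (u # ys @ [z])"
      by (simp only: successively_append_iff)
    moreover have "set ys \<subseteq> {v \<in> V. f v < f u}" "distinct (u # ys @ [z])"
      using xs(1,2) split by fastforce+
    ultimately have "path_via E {v \<in> V. f v < f u} u z"
      unfolding path_via_def by blast
    moreover have "z \<in> V" "u \<noteq> z" using xs(1,2) split(1) by auto
    ultimately show False using no_path split(2) by blast
  next
    case False
    then have "path_via E {v \<in> V. f v < f u} u w"
      using xs unfolding path_via_def by force
    then show False using no_path assms(3-5) by simp
  qed
qed

lemma ordered_coloring_refine:
  assumes ord: "ordered_coloring V E f"
    and less: "\<And>u v. u \<in> V \<Longrightarrow> v \<in> V \<Longrightarrow> f u < f v \<Longrightarrow> g u < g v"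
    and eq: "\<And>u v. u \<in> V \<Longrightarrow> v \<in> V \<Longrightarrow> g u = g v \<Longrightarrow> f u = f v"
  shows "ordered_coloring V E g"
  unfolding ordered_coloring_def
proof (intro ballI impI notI)
  fix c u w
  assume u: "u \<in> V" and w: "w \<in> V" and uw: "u \<noteq> w \<and> g u = c \<and> g w = c"
    and path: "path_via E {v \<in> V. g v < c} u w"
  have "{v \<in> V. g v < c} \<subseteq> {v \<in> V. f v \<le> f u}"
  proof (intro subsetI CollectI conjI)
    fix v assume v: "v \<in> {v \<in> V. g v < c}"
    then show "v \<in> V" by simp
    show "f v \<le> f u"
      using less[OF u \<open>v \<in> V\<close>] v uw by (metis (mono_tags) mem_Collect_eq not_le order.asym)
  qed
  with path have "path_via E {v \<in> V. f v \<le> f u} u w"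
    by (rule path_via_mono)
  moreover have "f u = f w" using eq[OF u w] uw by simp
  ultimately show False
    using ordered_coloring_no_path_le[OF ord u w] uw by simp
qed

lemma map_upt_eq_iff: "map f [0..<length xs] = xs \<longleftrightarrow> (\<forall>i < length xs. f i = xs ! i)"
proof -
  have "map f [0..<length xs] = xs \<longleftrightarrow> map f [0..<length xs] = map ((!) xs) [0..<length xs]"
    by (simp only: map_nth)
  also have "\<dots> \<longleftrightarrow> (\<forall>i < length xs. f i = xs ! i)"
    unfolding map_eq_conv by auto
  finally show ?thesis .
qed

lemma coloring_type_eq_iff:
  assumes "f ` V = {1..length \<alpha>}"
  shows "coloring_type V f = \<alpha> \<longleftrightarrow> (\<forall>i < length \<alpha>. card (color_class V f (Suc i)) = \<alpha> ! i)"
proof -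
  have "sorted_list_of_set (f ` V) = map Suc [0..<length \<alpha>]"
    using assms by (simp add: map_Suc_upt flip: atLeastLessThanSuc_atLeastAtMost)
  then have "coloring_type V f = map (\<lambda>i. card (color_class V f (Suc i))) [0..<length \<alpha>]"
    by (simp add: coloring_type_def color_class_def)
  then show ?thesis
    by (simp only: map_upt_eq_iff)
qed

definition ordered_colorings :: "'a set \<Rightarrow> ('a \<Rightarrow> 'a \<Rightarrow> bool) \<Rightarrow> nat list \<Rightarrow> ('a \<Rightarrow> nat) set" where
  "ordered_colorings V E \<alpha> = {f \<in> V \<rightarrow>\<^sub>E {1..length \<alpha>}. ordered_coloring V E f
      \<and> (\<forall>i < length \<alpha>. card (color_class V f (Suc i)) = \<alpha> ! i)}"

lemma finite_ordered_colorings: "finite V \<Longrightarrow> finite (ordered_colorings V E \<alpha>)"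
  by (simp add: ordered_colorings_def finite_PiE)

lemma image_eq_if_class_sizes_pos:
  assumes "f \<in> V \<rightarrow> {1..length \<alpha>}" and "\<forall>x \<in> set \<alpha>. 0 < x"
    and sizes: "\<forall>i < length \<alpha>. card (color_class V f (Suc i)) = \<alpha> ! i"
  shows "f ` V = {1..length \<alpha>}"
proof
  show "f ` V \<subseteq> {1..length \<alpha>}" using assms(1) by auto
  show "{1..length \<alpha>} \<subseteq> f ` V"
  proof
    fix c assume "c \<in> {1..length \<alpha>}"
    then have "c - 1 < length \<alpha>" "Suc (c - 1) = c" by auto
    then have "card (color_class V f c) = \<alpha> ! (c - 1)"
      using sizes by metis
    also have "\<dots> > 0" using assms(2) \<open>c - 1 < length \<alpha>\<close> by simp
    finally show "c \<in> f ` V"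
      unfolding color_class_def by (metis (mono_tags, lifting) card.empty empty_Collect_eq imageI less_irrefl)
  qed
qed

lemma zeta_eq_card_ordered_colorings:
  assumes "\<forall>x \<in> set \<alpha>. 0 < x"
  shows "zeta \<alpha> V E = card (ordered_colorings V E \<alpha>)"
proof -
  have "f \<in> V \<rightarrow>\<^sub>E {1..length \<alpha>} \<and> f ` V = {1..length \<alpha>} \<and> ordered_coloring V E f
        \<and> coloring_type V f = \<alpha> \<longleftrightarrow> f \<in> ordered_colorings V E \<alpha>" for f
    using image_eq_if_class_sizes_pos[OF _ assms, of f V] coloring_type_eq_iff[of f V \<alpha>]
    unfolding ordered_colorings_def by (auto simp: PiE_iff)
  then have "{f \<in> V \<rightarrow>\<^sub>E {1..length \<alpha>}. f ` V = {1..length \<alpha>} \<and> ordered_coloring V E f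
      \<and> coloring_type V f = \<alpha>} = ordered_colorings V E \<alpha>"
    by blast
  then show ?thesis
    by (simp only: zeta_def)
qed

definition split_color :: "nat \<Rightarrow> 'a set \<Rightarrow> ('a \<Rightarrow> nat) \<Rightarrow> 'a \<Rightarrow> nat" where
  "split_color k S f v = (if f v < k \<or> f v = k \<and> v \<in> S then f v else Suc (f v))"

definition merge_color :: "nat \<Rightarrow> nat \<Rightarrow> nat" where
  "merge_color k c = (if c \<le> k then c else c - 1)"

lemma merge_split_color [simp]: "merge_color k (split_color k S f v) = f v"
  by (simp add: merge_color_def split_color_def)

lemma split_color_strict_mono: "f u < f v \<Longrightarrow> split_color k S f u < split_color k S f v"
  by (auto simp: split_color_def)

lemma ordered_coloring_split_color:
  assumes "ordered_coloring V E f"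
  shows "ordered_coloring V E (\<lambda>v \<in> V. split_color k S f v)"
proof (rule ordered_coloring_refine[OF assms])
  fix u v assume "u \<in> V" "v \<in> V"
  then show "f u < f v \<Longrightarrow> (\<lambda>v \<in> V. split_color k S f v) u < (\<lambda>v \<in> V. split_color k S f v) v"
    and "(\<lambda>v \<in> V. split_color k S f v) u = (\<lambda>v \<in> V. split_color k S f v) v \<Longrightarrow> f u = f v"
    by (simp_all add: split_color_strict_mono) (metis merge_split_color)
qed

lemma color_class_split_color:
  assumes "S \<subseteq> color_class V f k"
  shows "color_class V (\<lambda>v \<in> V. split_color k S f v) c =
    (if c < k then color_class V f c else if c = k then S
     else if c = Suc k then color_class V f k - S else color_class V f (c - 1))"
  using assms by (auto simp: color_class_def split_color_def)

lemma restrict_split_color_PiE: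
  assumes "f \<in> V \<rightarrow>\<^sub>E {1..m}"
  shows "(\<lambda>v \<in> V. split_color k S f v) \<in> V \<rightarrow>\<^sub>E {1..Suc m}"
  unfolding restrict_PiE_iff
proof
  fix v assume "v \<in> V"
  then have "f v \<in> {1..m}" using assms by blast
  then show "split_color k S f v \<in> {1..Suc m}"
    by (auto simp: split_color_def)
qed

lemma nth_split_part:
  "(xs @ a # b # ys) ! i =
    (if i < length xs then (xs @ c # ys) ! i else if i = length xs then a
     else if i = Suc (length xs) then b else (xs @ c # ys) ! (i - 1))"
  by (auto simp: nth_append nth_Cons' not_less)

lemma card_color_class_split_color:
  fixes xs ys :: "nat list"
  defines "k \<equiv> Suc (length xs)"
  assumes fin: "finite V"
    and sizes: "\<forall>i < length (xs @ (a + b) # ys). card (color_class V f (Suc i)) = (xs @ (a + b) # ys) ! i"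
    and S: "S \<subseteq> color_class V f k" "card S = a"
    and i: "i < length (xs @ a # b # ys)"
  shows "card (color_class V (\<lambda>v \<in> V. split_color k S f v) (Suc i)) = (xs @ a # b # ys) ! i"
proof -
  have classes: "color_class V (\<lambda>v \<in> V. split_color k S f v) (Suc i) =
      (if Suc i < k then color_class V f (Suc i) else if Suc i = k then S
       else if i = k then color_class V f k - S else color_class V f i)"
    using S(1) by (simp add: color_class_split_color)
  consider "i < length xs" | "i = length xs" | "i = Suc (length xs)" | "Suc (length xs) < i"
    by linarith
  then show ?thesis
  proof cases
    case 1
    then show ?thesis
      using classes sizes by (simp add: k_def nth_append)
  next
    case 2
    then show ?thesis
      using classes S(2) by (simp add: k_def)
  next
    case 3
    have "card (color_class V f k) = a + b"
      using sizes by (simp add: k_def)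
    moreover have "finite S"
      using fin S(1) by (simp add: color_class_def finite_subset)
    ultimately have "card (color_class V f k - S) = b"
      using S by (simp add: card_Diff_subset)
    then show ?thesis
      using 3 classes by (simp add: k_def nth_append)
  next
    case 4
    then have "i - 1 < length (xs @ (a + b) # ys)" "Suc (i - 1) = i"
      using i by auto
    then have "card (color_class V f i) = (xs @ (a + b) # ys) ! (i - 1)"
      using sizes by metis
    then show ?thesis
      using 4 classes by (simp add: k_def nth_split_part[where c = "a + b"])
  qed
qed

lemma zeta_split_part_le:
  fixes xs ys :: "nat list"
  assumes fin: "finite V" and pos: "\<forall>x \<in> set (xs @ ys). 0 < x" and "0 < a" "0 < b"
  shows "zeta (xs @ (a + b) # ys) V E \<le> zeta (xs @ a # b # ys) V E"
proof -
  define k where "k = Suc (length xs)"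
  define S where "S f = (SOME S. S \<subseteq> color_class V f k \<and> card S = a)" for f :: "'a \<Rightarrow> nat"
  define split where "split f = (\<lambda>v \<in> V. split_color k (S f) f v)" for f
  have "inj_on split (ordered_colorings V E (xs @ (a + b) # ys))"
  proof (rule inj_on_inverseI)
    fix f assume "f \<in> ordered_colorings V E (xs @ (a + b) # ys)"
    then show "(\<lambda>v \<in> V. merge_color k (split f v)) = f"
      by (auto simp: ordered_colorings_def split_def PiE_def extensional_def)
  qed
  moreover have "split ` ordered_colorings V E (xs @ (a + b) # ys) \<subseteq> ordered_colorings V E (xs @ a # b # ys)"
  proof (rule image_subsetI)
    fix f assume "f \<in> ordered_colorings V E (xs @ (a + b) # ys)"
    then have f: "f \<in> V \<rightarrow>\<^sub>E {1..length (xs @ (a + b) # ys)}" "ordered_coloring V E f"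
      and sizes: "\<forall>i < length (xs @ (a + b) # ys). card (color_class V f (Suc i)) = (xs @ (a + b) # ys) ! i"
      by (simp_all add: ordered_colorings_def)
    have "card (color_class V f k) = a + b"
      using sizes by (simp add: k_def)
    then have "\<exists>S. S \<subseteq> color_class V f k \<and> card S = a"
      by (metis le_add1 obtain_subset_with_card_n)
    then have S: "S f \<subseteq> color_class V f k" "card (S f) = a"
      unfolding S_def by (metis (mono_tags, lifting) someI_ex)+
    show "split f \<in> ordered_colorings V E (xs @ a # b # ys)"
      unfolding ordered_colorings_def split_def k_def
      using restrict_split_color_PiE[OF f(1)] ordered_coloring_split_color[OF f(2)]
        card_color_class_split_color[OF fin sizes S[unfolded k_def]]
      by simp
  qed
  ultimately have "card (ordered_colorings V E (xs @ (a + b) # ys))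
      \<le> card (ordered_colorings V E (xs @ a # b # ys))"
    by (intro card_inj_on_le finite_ordered_colorings fin)
  then show ?thesis
    using pos assms(3,4) by (simp add: zeta_eq_card_ordered_colorings)
qed

lemma sum_list_pos: "\<forall>x \<in> set xs. 0 < x \<Longrightarrow> xs \<noteq> [] \<Longrightarrow> 0 < sum_list (xs :: nat list)"
  by (cases xs) auto

lemma zeta_merge_block_le:
  assumes fin: "finite V" and "\<forall>x \<in> set (xs @ b @ ys). 0 < x" and "b \<noteq> []"
  shows "zeta (xs @ [sum_list b] @ ys) V E \<le> zeta (xs @ b @ ys) V E"
  using assms(2,3)
proof (induction b arbitrary: xs)
  case (Cons x r)
  show ?case
  proof (cases "r = []")
    case False
    have "zeta (xs @ (x + sum_list r) # ys) V E \<le> zeta (xs @ x # sum_list r # ys) V E"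
      using Cons.prems False by (intro zeta_split_part_le[OF fin]) (auto intro: sum_list_pos)
    also have "\<dots> \<le> zeta ((xs @ [x]) @ r @ ys) V E"
      using Cons.IH[of "xs @ [x]"] Cons.prems False by simp
    finally show ?thesis by simp
  qed simp
qed simp

lemma zeta_refines_le:
  assumes fin: "finite V" and "\<forall>x \<in> set (xs @ concat bs). 0 < x" and "\<forall>b \<in> set bs. b \<noteq> []"
  shows "zeta (xs @ map sum_list bs) V E \<le> zeta (xs @ concat bs) V E"
  using assms(2,3)
proof (induction bs arbitrary: xs)
  case (Cons b bs)
  have "\<forall>c \<in> set bs. 0 < sum_list c"
    using Cons.prems by (auto intro: sum_list_pos)
  then have "zeta (xs @ [sum_list b] @ map sum_list bs) V E \<le> zeta (xs @ b @ map sum_list bs) V E"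
    using Cons.prems by (intro zeta_merge_block_le[OF fin]) auto
  also have "\<dots> \<le> zeta ((xs @ b) @ concat bs) V E"
    using Cons.IH[of "xs @ b"] Cons.prems by simp
  finally show ?case by simp
qed simp

theorem mainTheorem13:
  fixes V :: "'a set" and E :: "'a \<Rightarrow> 'a \<Rightarrow> bool" and n :: nat and \<alpha> \<beta> :: "nat list"
  assumes "simple_graph V E" and "card V = n"
    and "composition n \<alpha>" and "composition n \<beta>" and "refines \<beta> \<alpha>"
  shows "zeta \<alpha> V E \<le> zeta \<beta> V E"
proof -
  have "finite V" using assms(1) by (simp add: simple_graph_def)
  obtain bs where "\<forall>b \<in> set bs. b \<noteq> []" "concat bs = \<beta>" "map sum_list bs = \<alpha>"
    using assms(5) unfolding refines_def by blast
  moreover have "\<forall>x \<in> set \<beta>. 0 < x" using assms(4) by (simp add: composition_def)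
  ultimately show ?thesis
    using zeta_refines_le[OF \<open>finite V\<close>, of "[]" bs E] by simp
qed

end
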